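(* Let $f:V\to W$ be a smooth map between finite-dimensional real inner product spaces with $|f|_{[r]}<\infty$, and let $P$ be a monopolar $k$-chain in $V$. Then $|f_*P|^{\natural_r}\le|f|_{[r]}\,|P|^{\natural_r}$.
   Context: For a simple $k$-vector $\alpha=w_1\wedge\dots\wedge w_k$, $M(\alpha)=\sqrt{\det\langle w_i,w_j\rangle}$. A monopolar $k$-chain in $V$ is a finite formal sum $\sum_i(p_i;\alpha_i)$, $p_i\in V$, $\alpha_i\in\Lambda_k(V)$, linear in the second slot at each point. $T_u(p;\alpha)=(p+u;\alpha)$, $\Delta_u=T_u-\mathrm{id}$, $\Delta^j_U=\Delta_{u_1}\circ\dots\circ\Delta_{u_j}$ for $U=(u_1,\dots,u_j)$, $\|\Delta^j_U(p;\alpha)\|_j=|u_1|\cdots|u_j|M(\alpha)$. A $k$-form is a linear functional $\omega$ on monopolar $k$-chains; $\|\omega\|_0=\sup\{|\omega(p;\alpha)|:\alpha$ simple, $M(\alpha)=1\}$, $\|\omega\|_j=\sup\{|\omega(\Delta^j_U(p;\alpha))|:\|\Delta^j_U(p;\alpha)\|_j=1\}$, $|\omega|^{\natural_r}=\max_{0\le j\le r}\|\omega\|_j$, $\mathcal B_k^r$ = forms with finite $|\omega|^{\natural_r}$. For a chain $P$, $|P|^{\natural_r}=\sup_{0\ne\omega\in\mathcal B_k^r}\omega(P)/|\omega|^{\natural_r}$. Pushforward: $f_*(x;v_1\wedge\dots\wedge v_k)=(f(x);Df_xv_1\wedge\dots\wedge Df_xv_k)$, extended linearly. $\|f\|_{[j]}=\sup|f_*\Delta^j_U(x;\alpha)|^{\natural_j}/\|\Delta^j_U(x;\alpha)\|_j$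 over $x$, nonzero $U$, nonzero simple $\alpha$; $|f|_{[r]}=\max\{\|f\|_{[0]},\dots,\|f\|_{[r]}\}$. *)

theory Defs
  imports "HOL-Analysis.Analysis"
begin

fun iter_dd :: "'v::real_normed_vector list \<Rightarrow> ('v \<Rightarrow> 'w::real_normed_vector) \<Rightarrow> 'v \<Rightarrow> 'w" where
  "iter_dd [] g = g"
| "iter_dd (v # vs) g = (\<lambda>x. frechet_derivative (iter_dd vs g) (at x) v)"

definition smooth_map :: "('v::real_normed_vector \<Rightarrow> 'w::real_normed_vector) \<Rightarrow> bool" where
  "smooth_map g \<longleftrightarrow> (\<forall>vs. (\<forall>x. iter_dd vs g differentiable (at x)) \<and> continuous_on UNIV (iter_dd vs g))"

section \<open>Mass of a simple k-vector w_1 \<and> ... \<and> w_k, given by the list [w_1,...,w_k]\<close>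

definition det_list :: "nat \<Rightarrow> (nat \<Rightarrow> nat \<Rightarrow> real) \<Rightarrow> real" where
  "det_list n A = (\<Sum>p | p permutes {..<n}. of_int (sign p) * (\<Prod>i<n. A i (p i)))"

definition mass :: "'v::real_inner list \<Rightarrow> real" where
  "mass ws = sqrt (det_list (length ws) (\<lambda>i j. inner (ws ! i) (ws ! j)))"

text \<open>A monopolar chain is a finite formal sum of terms c (p; w_1 \<and> ... \<and> w_k); it is represented
  by a list of triples (c, p, [w_1,...,w_k]).  Every k-vector is a finite sum of simple ones,
  so every monopolar k-chain has such a representation.  Forms are linear, so all quantities
  below only depend on the chain, not on the chosen representation.\<close>

type_synonym 'v chain = "(real \<times> 'v \<times> 'v list) list"

definition kchain :: "nat \<Rightarrow> 'v chain \<Rightarrow> bool" where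
  "kchain k P \<longleftrightarrow> (\<forall>(c, p, ws) \<in> set P. length ws = k)"

definition simple_chain :: "'v \<Rightarrow> 'v list \<Rightarrow> 'v chain" where
  "simple_chain p ws = [(1, p, ws)]"

definition transl :: "'v::real_vector \<Rightarrow> 'v chain \<Rightarrow> 'v chain" where
  "transl u P = map (\<lambda>(c, p, ws). (c, p + u, ws)) P"

definition diff_op :: "'v::real_vector \<Rightarrow> 'v chain \<Rightarrow> 'v chain" where
  "diff_op u P = transl u P @ map (\<lambda>(c, p, ws). (- c, p, ws)) P"

fun diff_iter :: "'v::real_vector list \<Rightarrow> 'v chain \<Rightarrow> 'v chain" where
  "diff_iter [] P = P"
| "diff_iter (u # U) P = diff_op u (diff_iter U P)"

definition dnorm :: "'v::real_inner list \<Rightarrow> 'v list \<Rightarrow> real" where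
  "dnorm U ws = (\<Prod>u\<leftarrow>U. norm u) * mass ws"

text \<open>A linear functional on monopolar k-chains is the same as a choice, at every point p,
  of a linear functional on Lambda_k(V), i.e. of an alternating k-linear map on V.\<close>

definition kform :: "nat \<Rightarrow> ('v::real_vector \<Rightarrow> 'v list \<Rightarrow> real) \<Rightarrow> bool" where
  "kform k \<omega> \<longleftrightarrow>
     (\<forall>p ws. length ws \<noteq> k \<longrightarrow> \<omega> p ws = 0) \<and>
     (\<forall>p ws i. length ws = k \<longrightarrow> i < k \<longrightarrow> linear (\<lambda>v. \<omega> p (ws[i := v]))) \<and>
     (\<forall>p ws i j. length ws = k \<longrightarrow> i < k \<longrightarrow> j < k \<longrightarrow> i \<noteq> j \<longrightarrow> ws ! i = ws ! j \<longrightarrow> \<omega> p ws = 0)"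

definition eval_form :: "('v \<Rightarrow> 'v list \<Rightarrow> real) \<Rightarrow> 'v chain \<Rightarrow> real" where
  "eval_form \<omega> P = (\<Sum>(c, p, ws)\<leftarrow>P. c * \<omega> p ws)"

definition form_norm_j :: "nat \<Rightarrow> nat \<Rightarrow> ('v::real_inner \<Rightarrow> 'v list \<Rightarrow> real) \<Rightarrow> ereal" where
  "form_norm_j k j \<omega> = Sup (insert 0 ((\<lambda>(p, U, ws).
       ereal \<bar>eval_form \<omega> (diff_iter U (simple_chain p ws))\<bar>) ` {(p, U, ws). length U = j \<and> length ws = k \<and> dnorm U ws = 1}))"

text \<open>All sups are of nonnegative quantities (the chain-norm set is symmetric under
  omega to -omega); 0 is inserted only so that an empty sup is 0.  For j = 0 this is exactly the comass sup{|omega(p;alpha)| : alpha simple, M(alpha)=1}.\<close>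

definition form_norm :: "nat \<Rightarrow> nat \<Rightarrow> ('v::real_inner \<Rightarrow> 'v list \<Rightarrow> real) \<Rightarrow> ereal" where
  "form_norm k r \<omega> = Max ((\<lambda>j. form_norm_j k j \<omega>) ` {0..r})"

definition chain_norm :: "nat \<Rightarrow> nat \<Rightarrow> 'v::real_inner chain \<Rightarrow> ereal" where
  "chain_norm k r P = Sup (insert 0 ((\<lambda>\<omega>. ereal (eval_form \<omega> P / real_of_ereal (form_norm k r \<omega>))) `
       {\<omega>. kform k \<omega> \<and> \<omega> \<noteq> (\<lambda>p ws. 0) \<and> form_norm k r \<omega> < \<infinity>}))"

definition push :: "('v::real_normed_vector \<Rightarrow> 'w::real_normed_vector) \<Rightarrow> 'v chain \<Rightarrow> 'w chain" where
  "push f P = map (\<lambda>(c, x, ws). (c, f x, map (frechet_derivative f (at x)) ws)) P"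

definition map_norm_j :: "nat \<Rightarrow> nat \<Rightarrow> ('v::real_inner \<Rightarrow> 'w::real_inner) \<Rightarrow> ereal" where
  "map_norm_j k j f = Sup (insert 0 ((\<lambda>(x, U, ws).
       chain_norm k j (push f (diff_iter U (simple_chain x ws))) / ereal (dnorm U ws)) ` {(x, U, ws). length U = j \<and> (\<forall>u \<in> set U. u \<noteq> 0) \<and>
         length ws = k \<and> mass ws \<noteq> 0}))"

definition map_norm :: "nat \<Rightarrow> nat \<Rightarrow> ('v::real_inner \<Rightarrow> 'w::real_inner) \<Rightarrow> ereal" where
  "map_norm k r f = Max ((\<lambda>j. map_norm_j k j f) ` {0..r})"

end

theory Submission
  imports Defs
begin

text \<open>By duality, \<open>\<omega>(f\<^sub>*P) = (f\<^sup>*\<omega>)(P) \<le> |P|\<^sup>\<natural>\<^sup>r |f\<^sup>*\<omega>|\<^sup>\<natural>\<^sup>r\<close>. Each quotient defining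
  \<open>|f\<^sup>*\<omega>|\<^sup>\<natural>\<^sup>r\<close> is \<open>\<omega>\<close> applied to \<open>f\<^sub>*\<Delta>\<^sup>j\<^sub>U(p;\<alpha>)\<close> with \<open>\<parallel>\<Delta>\<^sup>j\<^sub>U(p;\<alpha>)\<parallel>\<^sub>j = 1\<close>, hence at most
  \<open>|f\<^sub>*\<Delta>\<^sup>j\<^sub>U(p;\<alpha>)|\<^sup>\<natural>\<^sup>j |\<omega>|\<^sup>\<natural>\<^sup>j \<le> |f|\<^sub>[\<^sub>r\<^sub>] |\<omega>|\<^sup>\<natural>\<^sup>r\<close>. The inequality \<open>|\<omega>(Q)| \<le> |Q|\<^sup>\<natural>\<^sup>r |\<omega>|\<^sup>\<natural>\<^sup>r\<close>
  behind both steps needs that a nonzero form has nonzero norm: an alternating multilinear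
  map vanishing on orthonormal frames vanishes identically, as one sees by orthogonalizing
  its arguments one at a time.\<close>

definition multilinear_alternating :: "nat \<Rightarrow> ('v::real_vector list \<Rightarrow> real) \<Rightarrow> bool" where
  "multilinear_alternating k g \<longleftrightarrow>
     (\<forall>ws i. length ws = k \<longrightarrow> i < k \<longrightarrow> linear (\<lambda>v. g (ws[i := v]))) \<and>
     (\<forall>ws i j. length ws = k \<longrightarrow> i < k \<longrightarrow> j < k \<longrightarrow> i \<noteq> j \<longrightarrow> ws ! i = ws ! j \<longrightarrow> g ws = 0)"

definition orthonormal_upto :: "nat \<Rightarrow> 'v::real_inner list \<Rightarrow> bool" where
  "orthonormal_upto m ws \<longleftrightarrow>
     (\<forall>i<m. norm (ws ! i) = 1 \<and> (\<forall>j<length ws. j \<noteq> i \<longrightarrow> ws ! i \<bullet> ws ! j = 0))"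

lemma kform_multilinear_alternating: "kform k \<omega> \<Longrightarrow> multilinear_alternating k (\<omega> p)"
  unfolding kform_def multilinear_alternating_def by blast

lemma det_list_identity:
  assumes "\<forall>i<n. \<forall>j<n. A i j = (if i = j then 1 else 0)"
  shows "det_list n A = 1"
proof -
  have "of_int (sign p) * (\<Prod>i<n. A i (p i)) = (if p = id then 1 else 0)"
    if p: "p permutes {..<n}" for p
  proof (cases "p = id")
    case False
    then obtain i where "p i \<noteq> i" by (meson eq_id_iff)
    moreover from this p have "i < n" "p i < n"
      by (auto simp: permutes_def permutes_in_image[OF p])
    ultimately have "(\<Prod>i<n. A i (p i)) = 0"
      using assms by (metis finite_lessThan lessThan_iff prod_zero)
    with False show ?thesis by simp
  qed (use assms in simp)
  then have "det_list n A = (\<Sum>p | p permutes {..<n}. if p = id then 1 else 0)"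
    unfolding det_list_def by (intro sum.cong) auto
  also have "\<dots> = 1"
    using finite_permutations[of "{..<n}"] by simp
  finally show ?thesis .
qed

lemma mass_orthonormal:
  assumes "orthonormal_upto (length ws) ws"
  shows "mass ws = 1"
proof -
  have "ws ! i \<bullet> ws ! j = (if i = j then 1 else 0)" if "i < length ws" "j < length ws" for i j
    using assms that unfolding orthonormal_upto_def by (auto simp: dot_square_norm)
  then show ?thesis
    unfolding mass_def by (simp add: det_list_identity)
qed

lemma multilinear_alternating_linear:
  "multilinear_alternating k g \<Longrightarrow> length ws = k \<Longrightarrow> i < k \<Longrightarrow> linear (\<lambda>v. g (ws[i := v]))"
  unfolding multilinear_alternating_def by blast

lemma multilinear_alternating_repeated:
  "multilinear_alternating k g \<Longrightarrow> length ws = k \<Longrightarrow> i < k \<Longrightarrow> j < k \<Longrightarrow> i \<noteq> j \<Longrightarrow>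
    ws ! i = ws ! j \<Longrightarrow> g ws = 0"
  unfolding multilinear_alternating_def by blast

lemma multilinear_alternating_update_span:
  assumes g: "multilinear_alternating k g" and l: "length ws = k" and n: "n < k"
    and v: "v \<in> span {ws ! j | j. j < k \<and> j \<noteq> n}"
  shows "g (ws[n := v]) = 0"
proof -
  have "span {ws ! j | j. j < k \<and> j \<noteq> n} \<subseteq> {v. g (ws[n := v]) = 0}"
  proof (rule span_minimal)
    have "g (ws[n := ws ! j]) = 0" if "j < k" "j \<noteq> n" for j
      by (rule multilinear_alternating_repeated[OF g, of _ n j]) (use l n that in auto)
    then show "{ws ! j | j. j < k \<and> j \<noteq> n} \<subseteq> {v. g (ws[n := v]) = 0}"
      by blast
    show "subspace {v. g (ws[n := v]) = 0}"
      by (rule linear_subspace_kernel[OF multilinear_alternating_linear[OF g l n]])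
  qed
  with v show ?thesis by blast
qed

lemma multilinear_alternating_orthogonalize:
  fixes ws :: "'v::euclidean_space list"
  assumes g: "multilinear_alternating k g" and l: "length ws = k" and n: "n < k"
  obtains z where "g ws = g (ws[n := z])" "\<And>j. j < k \<Longrightarrow> j \<noteq> n \<Longrightarrow> ws ! j \<bullet> z = 0"
proof -
  define S where "S = {ws ! j | j. j < k \<and> j \<noteq> n}"
  obtain y z where y: "y \<in> span S" and z: "\<And>w. w \<in> span S \<Longrightarrow> orthogonal z w"
    and yz: "ws ! n = y + z"
    using orthogonal_subspace_decomp_exists by blast
  have lin: "linear (\<lambda>v. g (ws[n := v]))"
    by (rule multilinear_alternating_linear[OF g l n])
  have "g ws = g (ws[n := y + z])"
    by (simp flip: yz)
  also have "\<dots> = g (ws[n := y]) + g (ws[n := z])"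
    by (rule linear_add[OF lin])
  also have "g (ws[n := y]) = 0"
    using multilinear_alternating_update_span[OF g l n] y by (simp add: S_def)
  finally have "g ws = g (ws[n := z])" by simp
  moreover have "ws ! j \<bullet> z = 0" if "j < k" "j \<noteq> n" for j
  proof -
    have "ws ! j \<in> span S"
      using that unfolding S_def by (blast intro: span_base)
    then show ?thesis
      using z[of "ws ! j"] by (simp add: orthogonal_def inner_commute)
  qed
  ultimately show thesis using that by blast
qed

lemma multilinear_alternating_eq_0_orthonormal_upto:
  fixes ws :: "'v::euclidean_space list"
  assumes g: "multilinear_alternating k g"
    and on: "\<And>ws. length ws = k \<Longrightarrow> orthonormal_upto k ws \<Longrightarrow> g ws = 0"
    and "m \<le> k" "length ws = k" "orthonormal_upto m ws"
  shows "g ws = 0"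
  using assms(3-)
proof (induction m arbitrary: ws rule: inc_induct)
  case base
  then show ?case by (rule on)
next
  case (step m)
  obtain z where gz: "g ws = g (ws[m := z])" and z: "\<And>j. j < k \<Longrightarrow> j \<noteq> m \<Longrightarrow> ws ! j \<bullet> z = 0"
    using multilinear_alternating_orthogonalize[OF g step.prems(1) step.hyps(2)] by blast
  have lin: "linear (\<lambda>v. g (ws[m := v]))"
    by (rule multilinear_alternating_linear[OF g step.prems(1) step.hyps(2)])
  show ?case
  proof (cases "z = 0")
    case True
    then show ?thesis using gz linear_0[OF lin] by simp
  next
    case False
    define e where "e = z /\<^sub>R norm z"
    have e: "norm e = 1" "\<And>j. j < k \<Longrightarrow> j \<noteq> m \<Longrightarrow> ws ! j \<bullet> e = 0"
      using False z by (simp_all add: e_def)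
    have "orthonormal_upto (Suc m) (ws[m := e])"
      unfolding orthonormal_upto_def
    proof (intro allI impI conjI)
      fix i assume i: "i < Suc m"
      then show "norm (ws[m := e] ! i) = 1"
        using e step.prems step.hyps(2) unfolding orthonormal_upto_def
        by (cases "i = m") (auto simp: nth_list_update)
      fix j assume j: "j < length (ws[m := e])" "j \<noteq> i"
      then show "ws[m := e] ! i \<bullet> ws[m := e] ! j = 0"
        using i e step.prems step.hyps(2) unfolding orthonormal_upto_def
        by (cases "i = m"; cases "j = m") (auto simp: nth_list_update inner_commute)
    qed
    then have "g (ws[m := e]) = 0"
      using step.IH step.prems(1) by simp
    moreover have "g ws = norm z * g (ws[m := e])"
      using gz linear_scale[OF lin, of "norm z" e] False by (simp add: e_def)
    ultimately show ?thesis by simp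
  qed
qed

corollary multilinear_alternating_eq_0:
  assumes g: "multilinear_alternating k (g :: 'v::euclidean_space list \<Rightarrow> real)"
    and on: "\<And>ws. length ws = k \<Longrightarrow> mass ws = 1 \<Longrightarrow> g ws = 0"
    and "length ws = k"
  shows "g ws = 0"
proof (rule multilinear_alternating_eq_0_orthonormal_upto[where m = 0, OF g _ _ \<open>length ws = k\<close>])
  show "g ws = 0" if "length ws = k" "orthonormal_upto k ws" for ws
    using on that mass_orthonormal by metis
qed (simp_all add: orthonormal_upto_def)

lemma form_norm_j_upper:
  assumes "length U = j" "length ws = k" "dnorm U ws = 1"
  shows "ereal \<bar>eval_form \<omega> (diff_iter U (simple_chain p ws))\<bar> \<le> form_norm_j k j \<omega>"
  unfolding form_norm_j_def
  by (rule Sup_upper) (rule insertI2, rule image_eqI[of _ _ "(p, U, ws)"], use assms in auto)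

lemma form_norm_j_nonneg: "0 \<le> form_norm_j k j \<omega>"
  unfolding form_norm_j_def by (rule Sup_upper) simp

lemma form_norm_j_le_form_norm: "j \<le> r \<Longrightarrow> form_norm_j k j \<omega> \<le> form_norm k r \<omega>"
  unfolding form_norm_def by (rule Max_ge) auto

lemma form_norm_nonneg: "0 \<le> form_norm k r \<omega>"
  using form_norm_j_nonneg form_norm_j_le_form_norm[of 0 r] order_trans by blast

lemma form_norm_mono: "j \<le> r \<Longrightarrow> form_norm k j \<omega> \<le> form_norm k r \<omega>"
  unfolding form_norm_def by (rule Max_mono) auto

lemma chain_norm_nonneg: "0 \<le> chain_norm k r P"
  unfolding chain_norm_def by (rule Sup_upper) simp

lemma map_norm_j_nonneg: "0 \<le> map_norm_j k j f"
  unfolding map_norm_j_def by (rule Sup_upper) simp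

lemma map_norm_j_le_map_norm: "j \<le> r \<Longrightarrow> map_norm_j k j f \<le> map_norm k r f"
  unfolding map_norm_def by (rule Max_ge) auto

lemma map_norm_nonneg: "0 \<le> map_norm k r f"
  using map_norm_j_nonneg map_norm_j_le_map_norm[of 0 r] order_trans by blast

lemma eval_form_simple_chain: "eval_form \<omega> (simple_chain p ws) = \<omega> p ws"
  by (simp add: eval_form_def simple_chain_def)

lemma eval_form_uminus: "eval_form (\<lambda>p ws. - \<omega> p ws) Q = - eval_form \<omega> Q"
  by (induction Q) (auto simp: eval_form_def)

lemma form_norm_uminus: "form_norm k r (\<lambda>p ws. - \<omega> p ws) = form_norm k r \<omega>"
  unfolding form_norm_def form_norm_j_def eval_form_uminus by simp

lemma kform_uminus: "kform k \<omega> \<Longrightarrow> kform k (\<lambda>p ws. - \<omega> p ws)"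
  unfolding kform_def by (auto intro: linear_compose_neg)

lemma kform_eq_0_if_form_norm_eq_0:
  fixes \<omega> :: "'v::euclidean_space \<Rightarrow> 'v list \<Rightarrow> real"
  assumes \<omega>: "kform k \<omega>" and "form_norm k r \<omega> = 0"
  shows "\<omega> = (\<lambda>p ws. 0)"
proof (intro ext)
  fix p and ws :: "'v list"
  have comass: "form_norm_j k 0 \<omega> \<le> 0"
    using form_norm_j_le_form_norm[of 0 r k \<omega>] \<open>form_norm k r \<omega> = 0\<close> by simp
  have "\<omega> p vs = 0" if "length vs = k" "mass vs = 1" for vs
  proof -
    have "ereal \<bar>\<omega> p vs\<bar> \<le> 0"
      using order_trans[OF form_norm_j_upper[of "[]" 0 vs k \<omega> p] comass] that
      by (simp add: eval_form_simple_chain dnorm_def)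
    then show ?thesis by simp
  qed
  then show "\<omega> p ws = 0"
    using \<omega> multilinear_alternating_eq_0[OF kform_multilinear_alternating[OF \<omega>]]
    unfolding kform_def by blast
qed

lemma chain_norm_upper:
  assumes "kform k \<omega>" "\<omega> \<noteq> (\<lambda>p ws. 0)" "form_norm k r \<omega> < \<infinity>"
  shows "ereal (eval_form \<omega> P / real_of_ereal (form_norm k r \<omega>)) \<le> chain_norm k r P"
  unfolding chain_norm_def
  by (rule Sup_upper) (rule insertI2, rule image_eqI[of _ _ \<omega>], use assms in auto)

lemma chain_norm_least:
  assumes "0 \<le> C"
    and bound: "\<And>\<omega>. kform k \<omega> \<Longrightarrow> form_norm k r \<omega> < \<infinity> \<Longrightarrow>
      ereal (eval_form \<omega> P) \<le> C * form_norm k r \<omega>"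
  shows "chain_norm k r P \<le> C"
  unfolding chain_norm_def
proof (rule Sup_least)
  fix x assume "x \<in> insert 0 ((\<lambda>\<omega>. ereal (eval_form \<omega> P / real_of_ereal (form_norm k r \<omega>))) `
    {\<omega>. kform k \<omega> \<and> \<omega> \<noteq> (\<lambda>p ws. 0) \<and> form_norm k r \<omega> < \<infinity>})"
  then consider "x = 0" | \<omega> where "kform k \<omega>" "form_norm k r \<omega> < \<infinity>"
      "x = ereal (eval_form \<omega> P / real_of_ereal (form_norm k r \<omega>))"
    by auto
  then show "x \<le> C"
  proof cases
    case 2
    obtain n where n: "form_norm k r \<omega> = ereal n" "n \<ge> 0"
      using 2 form_norm_nonneg[of k r \<omega>] by (cases "form_norm k r \<omega>") auto
    have "ereal (eval_form \<omega> P) \<le> C * ereal n"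
      using bound[OF 2(1,2)] n(1) by simp
    with 2 n \<open>0 \<le> C\<close> show ?thesis
      by (cases C) (auto simp: divide_le_eq mult.commute zero_ereal_def)
  qed (use \<open>0 \<le> C\<close> in simp)
qed

text \<open>Testing the chain norm against both \<open>\<omega>\<close> and \<open>-\<omega>\<close>; the case \<open>|\<omega>|\<^sup>\<natural>\<^sup>r = 0\<close>, where the
  quotient in the definition of the chain norm degenerates, only occurs for \<open>\<omega> = 0\<close>.\<close>

lemma abs_eval_form_le:
  fixes \<omega> :: "'v::euclidean_space \<Rightarrow> 'v list \<Rightarrow> real"
  assumes \<omega>: "kform k \<omega>" and fin: "form_norm k r \<omega> < \<infinity>"
  shows "ereal \<bar>eval_form \<omega> Q\<bar> \<le> chain_norm k r Q * form_norm k r \<omega>"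
proof (cases "\<omega> = (\<lambda>p ws. 0)")
  case True
  then have "eval_form \<omega> Q = 0"
    unfolding eval_form_def by (induction Q) auto
  moreover have "0 \<le> chain_norm k r Q * form_norm k r \<omega>"
    by (simp add: chain_norm_nonneg form_norm_nonneg ereal_zero_le_0_iff)
  ultimately show ?thesis
    by (simp add: zero_ereal_def)
next
  case False
  have "form_norm k r \<omega> \<noteq> 0"
    using kform_eq_0_if_form_norm_eq_0[OF \<omega>] False by blast
  then obtain n where n: "form_norm k r \<omega> = ereal n" "n > 0"
    using fin form_norm_nonneg[of k r \<omega>] by (cases "form_norm k r \<omega>") auto
  have "(\<lambda>p ws. - \<omega> p ws) \<noteq> (\<lambda>p ws. 0)"
    using False by (metis neg_equal_0_iff_equal)
  then have "ereal (- eval_form \<omega> Q / n) \<le> chain_norm k r Q"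
    using chain_norm_upper[OF kform_uminus[OF \<omega>], of r Q] fin n
    by (simp add: form_norm_uminus eval_form_uminus)
  moreover have "ereal (eval_form \<omega> Q / n) \<le> chain_norm k r Q"
    using chain_norm_upper[OF \<omega> False fin, of Q] n by simp
  ultimately have "ereal (\<bar>eval_form \<omega> Q\<bar> / n) \<le> chain_norm k r Q"
    by (cases "eval_form \<omega> Q \<ge> 0") auto
  then have "ereal (\<bar>eval_form \<omega> Q\<bar> / n) * ereal n \<le> chain_norm k r Q * ereal n"
    using n by (intro ereal_mult_right_mono) auto
  then show ?thesis
    using n by simp
qed

definition pullback :: "('v::real_normed_vector \<Rightarrow> 'w::real_normed_vector) \<Rightarrow>
    ('w \<Rightarrow> 'w list \<Rightarrow> real) \<Rightarrow> 'v \<Rightarrow> 'v list \<Rightarrow> real" where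
  "pullback f \<omega> = (\<lambda>p ws. \<omega> (f p) (map (frechet_derivative f (at p)) ws))"

lemma eval_form_push: "eval_form \<omega> (push f Q) = eval_form (pullback f \<omega>) Q"
  by (induction Q) (auto simp: eval_form_def push_def pullback_def)

lemma kform_pullback:
  fixes f :: "'v::real_normed_vector \<Rightarrow> 'w::real_normed_vector"
  assumes \<omega>: "kform k \<omega>" and f: "\<And>x. f differentiable (at x)"
  shows "kform k (pullback f \<omega>)"
  unfolding kform_def
proof (intro conjI allI impI)
  fix p and ws :: "'v list" and i
  assume "length ws = k" "i < k"
  then have "linear (\<lambda>u. \<omega> (f p) ((map (frechet_derivative f (at p)) ws)[i := u]))"
    using \<omega> unfolding kform_def by simp
  from linear_compose[OF linear_frechet_derivative[OF f] this]
  show "linear (\<lambda>v. pullback f \<omega> p (ws[i := v]))"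
    by (simp add: pullback_def o_def map_update)
qed (use \<omega> in \<open>auto simp: kform_def pullback_def\<close>)

lemma dnorm_eq_1_nonzero:
  assumes "dnorm U ws = 1"
  shows "\<forall>u\<in>set U. u \<noteq> 0" "mass ws \<noteq> 0"
proof -
  have "prod_list (map norm U) \<noteq> 0" "mass ws \<noteq> 0"
    using assms by (auto simp: dnorm_def)
  then show "\<forall>u\<in>set U. u \<noteq> 0" "mass ws \<noteq> 0"
    by (auto simp: prod_list_zero_iff)
qed

lemma form_norm_j_pullback_le:
  fixes f :: "'v::euclidean_space \<Rightarrow> 'w::euclidean_space"
  assumes \<omega>: "kform k \<omega>" and fin: "form_norm k j \<omega> < \<infinity>"
  shows "form_norm_j k j (pullback f \<omega>) \<le> map_norm_j k j f * form_norm k j \<omega>"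
  unfolding form_norm_j_def
proof (rule Sup_least)
  fix x assume "x \<in> insert 0 ((\<lambda>(p, U, ws). ereal \<bar>eval_form (pullback f \<omega>) (diff_iter U (simple_chain p ws))\<bar>) `
      {(p, U, ws). length U = j \<and> length ws = k \<and> dnorm U ws = 1})"
  then consider "x = 0" | p U ws where "length U = j" "length ws = k" "dnorm U ws = 1"
      "x = ereal \<bar>eval_form (pullback f \<omega>) (diff_iter U (simple_chain p ws))\<bar>"
    by auto
  then show "x \<le> map_norm_j k j f * form_norm k j \<omega>"
  proof cases
    case 2
    define D where "D = diff_iter U (simple_chain p ws)"
    have "chain_norm k j (push f D) = chain_norm k j (push f D) / ereal (dnorm U ws)"
      using 2 by (simp add: one_ereal_def[symmetric])
    also have "\<dots> \<le> map_norm_j k j f"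
      unfolding map_norm_j_def D_def
      by (rule Sup_upper) (rule insertI2, rule image_eqI[of _ _ "(p, U, ws)"],
          use 2 dnorm_eq_1_nonzero[of U ws] in auto)
    finally have "chain_norm k j (push f D) * form_norm k j \<omega> \<le> map_norm_j k j f * form_norm k j \<omega>"
      by (rule ereal_mult_right_mono[OF _ form_norm_nonneg])
    with abs_eval_form_le[OF \<omega> fin, of "push f D"] show ?thesis
      using 2 by (simp add: D_def eval_form_push)
  qed (simp add: map_norm_j_nonneg form_norm_nonneg ereal_zero_le_0_iff)
qed

lemma form_norm_pullback_le:
  fixes f :: "'v::euclidean_space \<Rightarrow> 'w::euclidean_space"
  assumes \<omega>: "kform k \<omega>" and fin: "form_norm k r \<omega> < \<infinity>"
  shows "form_norm k r (pullback f \<omega>) \<le> map_norm k r f * form_norm k r \<omega>"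
  unfolding form_norm_def[of k r "pullback f \<omega>"]
proof (subst Max_le_iff, safe)
  fix j assume "j \<in> {0..r}"
  then have "j \<le> r" by simp
  have "form_norm k j \<omega> < \<infinity>"
    using form_norm_mono[OF \<open>j \<le> r\<close>] fin by (rule order_le_less_trans)
  then have "form_norm_j k j (pullback f \<omega>) \<le> map_norm_j k j f * form_norm k j \<omega>"
    by (rule form_norm_j_pullback_le[OF \<omega>])
  also have "\<dots> \<le> map_norm k r f * form_norm k r \<omega>"
    by (intro ereal_mult_mono map_norm_nonneg form_norm_nonneg
        map_norm_j_le_map_norm form_norm_mono \<open>j \<le> r\<close>)
  finally show "form_norm_j k j (pullback f \<omega>) \<le> map_norm k r f * form_norm k r \<omega>" .
qed auto

theorem mainTheorem6:
  fixes f :: "'v::euclidean_space \<Rightarrow> 'w::euclidean_space"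
    and P :: "'v chain" and k r :: nat
  assumes "smooth_map f"
    and "map_norm k r f < \<infinity>"
    and "kchain k P"
  shows "chain_norm k r (push f P) \<le> map_norm k r f * chain_norm k r P"
proof (rule chain_norm_least)
  have f: "\<And>x. f differentiable (at x)"
    using \<open>smooth_map f\<close> unfolding smooth_map_def by (metis iter_dd.simps(1))
  show "0 \<le> map_norm k r f * chain_norm k r P"
    by (simp add: map_norm_nonneg chain_norm_nonneg ereal_zero_le_0_iff)
  fix \<omega> :: "'w \<Rightarrow> 'w list \<Rightarrow> real"
  assume \<omega>: "kform k \<omega>" and fin: "form_norm k r \<omega> < \<infinity>"
  have pullback_le: "form_norm k r (pullback f \<omega>) \<le> map_norm k r f * form_norm k r \<omega>"
    by (rule form_norm_pullback_le[OF \<omega> fin])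
  also have "\<dots> < \<infinity>"
    using \<open>map_norm k r f < \<infinity>\<close> fin map_norm_nonneg[of k r f] form_norm_nonneg[of k r \<omega>]
    by (cases "map_norm k r f"; cases "form_norm k r \<omega>") auto
  finally have pullback_fin: "form_norm k r (pullback f \<omega>) < \<infinity>" .
  have "ereal (eval_form \<omega> (push f P)) \<le> ereal \<bar>eval_form (pullback f \<omega>) P\<bar>"
    by (simp add: eval_form_push)
  also have "\<dots> \<le> chain_norm k r P * form_norm k r (pullback f \<omega>)"
    by (rule abs_eval_form_le[OF kform_pullback[OF \<omega> f] pullback_fin])
  also have "\<dots> \<le> chain_norm k r P * (map_norm k r f * form_norm k r \<omega>)"
    by (rule ereal_mult_left_mono[OF pullback_le chain_norm_nonneg])
  finally show "ereal (eval_form \<omega> (push f P)) \<le> map_norm k r f * chain_norm k r P * form_norm k r \<omega>"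
    by (simp add: ac_simps)
qed

end
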